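(* Let $q$ be a fixed positive integer, let $n$ be divisible by $q$, let $\varepsilon=\varepsilon(n)$, and let $S$ be a set of ordered $q$-tuples of distinct elements of $[n]$ with $\varepsilon^2|S|^2/n^{2q-1}\gg\log n$. Let $\sigma$ be a uniformly random permutation of $[n]$ and let $N=|S\cap V(D_\sigma)|$, where $V(D_\sigma)=\{(\sigma((i-1)q+1),\dots,\sigma(iq)):i=1,\dots,n/q\}$. Then quite surely $N=(1\pm\varepsilon)\frac{|S|}{qn^{q-1}}$.
   Context: $a_n\gg b_n$ means $a_n/b_n\to\infty$ as $n\to\infty$; $x=(1\pm a)y$ means $(1-a)y\le x\le(1+a)y$. An event sequence $\mathcal E_n$ holds quite surely if $\Pr(\mathcal E_n)=1-O(n^{-K})$ for every positive constant $K$. *)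

theory Defs
  imports "HOL-Probability.Probability" "HOL-Combinatorics.Permutations"
    "HOL-Library.Landau_Symbols"
begin

definition block_tuples :: "nat \<Rightarrow> nat \<Rightarrow> (nat \<Rightarrow> nat) \<Rightarrow> nat list set" where
  "block_tuples q n \<sigma> = {map \<sigma> [(i - 1) * q + 1 ..< i * q + 1] | i. i \<in> {1..n div q}}"

definition unif_perm :: "nat \<Rightarrow> (nat \<Rightarrow> nat) pmf" where
  "unif_perm n = pmf_of_set {\<sigma>. \<sigma> permutes {1..n}}"

end

theory Submission
  imports Defs
begin

text \<open>Write \<open>n = q m\<close>. The count \<open>N\<close> is a sum over the \<open>m\<close> blocks of the indicator that \<open>\<sigma>\<close>
  maps the block onto a tuple of \<open>S\<close>, so \<open>E N = m |S| (n - q)! / n!\<close>, which lies between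
  \<open>|S| / (q n^(q-1))\<close> and \<open>1 + 2 q^2 / n\<close> times that value. Interchanging two values of \<open>\<sigma>\<close> changes
  \<open>N\<close> by at most 2, so McDiarmid's bounded-differences inequality for a uniformly random bijection
  (the Doob martingale revealing \<open>\<sigma>\<close> point by point, with Hoeffding's lemma for each increment)
  bounds the probability of a relative deviation \<open>\<epsilon>\<close> by
  \<open>2 exp (- \<epsilon>^2 |S|^2 / (8 q^2 n^(2q-1)))\<close>, which is \<open>O(n^(-K))\<close> under the growth hypothesis.\<close>

section \<open>Bijections between finite sets\<close>

text \<open>Fixing everything outside \<open>P\<close> makes these finitely many.\<close>

definition bijections :: "'a set \<Rightarrow> 'a set \<Rightarrow> ('a \<Rightarrow> 'a) set" where
  "bijections P A = {\<sigma>. bij_betw \<sigma> P A \<and> (\<forall>x. x \<notin> P \<longrightarrow> \<sigma> x = x)}"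

lemma bijections_self: "bijections P P = {\<sigma>. \<sigma> permutes P}"
  unfolding bijections_def
  using permutes_imp_bij permutes_not_in bij_imp_permutes by fastforce

lemma bijections_empty: "bijections {} {} = {id}"
  unfolding bijections_def by (auto simp: bij_betw_def)

lemma bijections_outside: "\<sigma> \<in> bijections P A \<Longrightarrow> x \<notin> P \<Longrightarrow> \<sigma> x = x"
  unfolding bijections_def by auto

lemma finite_bijections:
  assumes "finite P" "finite A"
  shows "finite (bijections P A)"
proof -
  have "bijections P A \<subseteq> (\<lambda>g x. if x \<in> P then g x else x) ` (P \<rightarrow>\<^sub>E A)"
  proof
    fix \<sigma> assume \<sigma>: "\<sigma> \<in> bijections P A"
    have "restrict \<sigma> P \<in> P \<rightarrow>\<^sub>E A" "\<sigma> = (\<lambda>x. if x \<in> P then restrict \<sigma> P x else x)"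
      using \<sigma> unfolding bijections_def bij_betw_def by auto
    then show "\<sigma> \<in> (\<lambda>g x. if x \<in> P then g x else x) ` (P \<rightarrow>\<^sub>E A)" by blast
  qed
  moreover have "finite (P \<rightarrow>\<^sub>E A)"
    using assms by (simp add: finite_PiE)
  ultimately show ?thesis
    by (meson finite_imageI finite_subset)
qed

lemma fun_upd_in_bijections:
  assumes "\<tau> \<in> bijections (P - {p}) (A - {a})" "p \<in> P" "a \<in> A"
  shows "\<tau>(p := a) \<in> bijections P A"
proof -
  have bij: "bij_betw \<tau> (P - {p}) (A - {a})" and out: "\<forall>x. x \<notin> P - {p} \<longrightarrow> \<tau> x = x"
    using assms(1) unfolding bijections_def by auto
  have "bij_betw (\<tau>(p := a)) (P - {p}) (A - {a})"
    using bij by (rule bij_betw_cong[THEN iffD1, rotated]) auto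
  moreover have "bij_betw (\<tau>(p := a)) {p} {a}"
    by (simp add: bij_betw_def)
  ultimately have "bij_betw (\<tau>(p := a)) ((P - {p}) \<union> {p}) ((A - {a}) \<union> {a})"
    by (rule bij_betw_combine) auto
  moreover have "(P - {p}) \<union> {p} = P" "(A - {a}) \<union> {a} = A"
    using assms(2,3) by auto
  ultimately show ?thesis
    using out unfolding bijections_def by auto
qed

lemma fun_upd_self_in_bijections:
  assumes "\<sigma> \<in> bijections P A" "p \<in> P"
  shows "\<sigma>(p := p) \<in> bijections (P - {p}) (A - {\<sigma> p})"
proof -
  have bij: "bij_betw \<sigma> P A" and out: "\<forall>x. x \<notin> P \<longrightarrow> \<sigma> x = x"
    using assms(1) unfolding bijections_def by auto
  have "bij_betw \<sigma> (P - {p}) (A - {\<sigma> p})"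
    using bij assms(2)
    by (metis bij_betw_DiffI bij_betw_apply bij_betw_singletonI empty_subsetI insert_subset)
  then have "bij_betw (\<sigma>(p := p)) (P - {p}) (A - {\<sigma> p})"
    by (rule bij_betw_cong[THEN iffD1, rotated]) auto
  then show ?thesis
    using out unfolding bijections_def by auto
qed

lemma inj_on_fun_upd_bijections:
  assumes "p \<in> P"
  shows "inj_on (\<lambda>\<tau>. \<tau>(p := a)) (bijections (P - {p}) B)"
proof (rule inj_onI)
  fix \<tau> \<tau>' assume "\<tau> \<in> bijections (P - {p}) B" "\<tau>' \<in> bijections (P - {p}) B" "\<tau>(p := a) = \<tau>'(p := a)"
  then show "\<tau> = \<tau>'"
    using bijections_outside[of \<tau> "P - {p}" B p] bijections_outside[of \<tau>' "P - {p}" B p]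
    by (metis Diff_iff fun_upd_idem_iff fun_upd_upd insertI1)
qed

lemma bijections_decompose:
  assumes "p \<in> P"
  shows "bijections P A = (\<Union>a\<in>A. (\<lambda>\<tau>. \<tau>(p := a)) ` bijections (P - {p}) (A - {a}))"
proof
  show "bijections P A \<subseteq> (\<Union>a\<in>A. (\<lambda>\<tau>. \<tau>(p := a)) ` bijections (P - {p}) (A - {a}))"
  proof
    fix \<sigma> assume \<sigma>: "\<sigma> \<in> bijections P A"
    have "\<sigma> p \<in> A" "\<sigma> = (\<sigma>(p := p))(p := \<sigma> p)"
      using \<sigma> assms unfolding bijections_def bij_betw_def by auto
    then show "\<sigma> \<in> (\<Union>a\<in>A. (\<lambda>\<tau>. \<tau>(p := a)) ` bijections (P - {p}) (A - {a}))"
      using fun_upd_self_in_bijections[OF \<sigma> assms] by blast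
  qed
qed (use fun_upd_in_bijections assms in auto)

lemma sum_bijections_decompose:
  assumes "p \<in> P" "finite P" "finite A"
  shows "(\<Sum>\<sigma>\<in>bijections P A. h \<sigma>) = (\<Sum>a\<in>A. \<Sum>\<tau>\<in>bijections (P - {p}) (A - {a}). h (\<tau>(p := a)))"
proof -
  have "(\<Sum>\<sigma>\<in>bijections P A. h \<sigma>)
      = (\<Sum>a\<in>A. \<Sum>\<sigma>\<in>(\<lambda>\<tau>. \<tau>(p := a)) ` bijections (P - {p}) (A - {a}). h \<sigma>)"
    unfolding bijections_decompose[OF assms(1)]
  proof (rule sum.UNION_disjoint)
    show "\<forall>a\<in>A. finite ((\<lambda>\<tau>. \<tau>(p := a)) ` bijections (P - {p}) (A - {a}))"
      using assms by (simp add: finite_bijections)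
    show "\<forall>a\<in>A. \<forall>b\<in>A. a \<noteq> b \<longrightarrow> (\<lambda>\<tau>. \<tau>(p := a)) ` bijections (P - {p}) (A - {a}) \<inter>
        (\<lambda>\<tau>. \<tau>(p := b)) ` bijections (P - {p}) (A - {b}) = {}"
      by (auto dest: fun_cong[where x = p])
  qed fact
  also have "\<dots> = (\<Sum>a\<in>A. \<Sum>\<tau>\<in>bijections (P - {p}) (A - {a}). h (\<tau>(p := a)))"
    by (simp add: sum.reindex[OF inj_on_fun_upd_bijections[OF assms(1)]])
  finally show ?thesis .
qed

lemma card_bijections:
  assumes "finite P" "finite A" "card P = card A"
  shows "card (bijections P A) = fact (card P)"
  using assms
proof (induction "card P" arbitrary: P A)
  case 0
  then show ?case by (simp add: bijections_empty)
next
  case (Suc m)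
  then obtain p where p: "p \<in> P" by fastforce
  have "card (bijections P A) = (\<Sum>a\<in>A. \<Sum>\<tau>\<in>bijections (P - {p}) (A - {a}). 1)"
    unfolding card_eq_sum by (rule sum_bijections_decompose[OF p Suc.prems(1,2)])
  also have "\<dots> = (\<Sum>a\<in>A. fact m)"
  proof (intro sum.cong refl)
    fix a assume "a \<in> A"
    then have "card (P - {p}) = m" "card (A - {a}) = m"
      using Suc.hyps(2) Suc.prems p by auto
    then show "(\<Sum>\<tau>\<in>bijections (P - {p}) (A - {a}). 1) = fact m"
      using Suc.hyps(1)[of "P - {p}" "A - {a}"] Suc.prems by simp
  qed
  also have "\<dots> = fact (card P)"
    using Suc by (metis of_nat_id fact_Suc sum_constant)
  finally show ?case .
qed

lemma card_bijections_map_eq: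
  assumes "finite P" "finite A" "card P = card A" "distinct ps" "set ps \<subseteq> P"
    "distinct s" "set s \<subseteq> A" "length ps = length s"
  shows "card {\<sigma> \<in> bijections P A. map \<sigma> ps = s} = fact (card P - length ps)"
  using assms
proof (induction ps arbitrary: P A s)
  case Nil
  then show ?case by (simp add: card_bijections)
next
  case (Cons p ps)
  then obtain a s' where s: "s = a # s'" by (cases s) auto
  have p: "p \<in> P" "p \<notin> set ps" and a: "a \<in> A"
    using Cons.prems s by auto
  let ?B = "{\<tau> \<in> bijections (P - {p}) (A - {a}). map \<tau> ps = s'}"
  have "{\<sigma> \<in> bijections P A. map \<sigma> (p # ps) = s} = (\<lambda>\<tau>. \<tau>(p := a)) ` ?B"
  proof
    show "(\<lambda>\<tau>. \<tau>(p := a)) ` ?B \<subseteq> {\<sigma> \<in> bijections P A. map \<sigma> (p # ps) = s}"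
      using fun_upd_in_bijections[OF _ p(1) a] p(2) s by (auto simp: map_fun_upd)
    show "{\<sigma> \<in> bijections P A. map \<sigma> (p # ps) = s} \<subseteq> (\<lambda>\<tau>. \<tau>(p := a)) ` ?B"
    proof
      fix \<sigma> assume "\<sigma> \<in> {\<sigma> \<in> bijections P A. map \<sigma> (p # ps) = s}"
      then have \<sigma>: "\<sigma> \<in> bijections P A" "\<sigma> p = a" "map \<sigma> ps = s'"
        using s by auto
      then have "\<sigma>(p := p) \<in> ?B"
        using fun_upd_self_in_bijections[OF \<sigma>(1) p(1)] p(2) by (simp add: map_fun_upd)
      moreover have "\<sigma> = (\<sigma>(p := p))(p := a)"
        using \<sigma>(2) by auto
      ultimately show "\<sigma> \<in> (\<lambda>\<tau>. \<tau>(p := a)) ` ?B" by blast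
    qed
  qed
  moreover have "inj_on (\<lambda>\<tau>. \<tau>(p := a)) ?B"
    using inj_on_fun_upd_bijections[OF p(1)] by (rule inj_on_subset) auto
  moreover have "card ?B = fact (card (P - {p}) - length ps)"
    using Cons.prems s p a by (intro Cons.IH) auto
  ultimately show ?case
    using p Cons.prems(1) by (simp add: card_image)
qed

section \<open>McDiarmid's inequality for random bijections\<close>

definition average :: "'a set \<Rightarrow> ('a \<Rightarrow> real) \<Rightarrow> real" where
  "average X h = (\<Sum>x\<in>X. h x) / real (card X)"

lemma average_mono: "(\<And>x. x \<in> X \<Longrightarrow> h x \<le> h' x) \<Longrightarrow> average X h \<le> average X h'"
  unfolding average_def by (intro divide_right_mono sum_mono) auto

lemma average_cmult: "average X (\<lambda>x. c * h x) = c * average X h"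
  unfolding average_def by (simp add: sum_distrib_left)

lemma average_bijections_decompose:
  assumes "p \<in> P" "finite P" "finite A" "card P = card A"
  shows "average (bijections P A) h
       = average A (\<lambda>a. average (bijections (P - {p}) (A - {a})) (\<lambda>\<tau>. h (\<tau>(p := a))))"
proof -
  obtain m where cP: "card P = Suc m" "card A = Suc m"
    using assms by (metis card_0_eq empty_iff not0_implies_Suc)
  have card_Ea: "card (bijections (P - {p}) (A - {a})) = fact m" if "a \<in> A" for a
    using assms that cP by (simp add: card_bijections)
  have "average (bijections P A) h
      = (\<Sum>a\<in>A. \<Sum>\<tau>\<in>bijections (P - {p}) (A - {a}). h (\<tau>(p := a))) / (Suc m * fact m)"
    unfolding average_def sum_bijections_decompose[OF assms(1-3)] card_bijections[OF assms(2-4)] cP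
    by simp
  also have "\<dots> = (\<Sum>a\<in>A. (\<Sum>\<tau>\<in>bijections (P - {p}) (A - {a}). h (\<tau>(p := a))) / fact m) / Suc m"
    by (simp add: sum_divide_distrib field_simps)
  also have "\<dots> = average A (\<lambda>a. average (bijections (P - {p}) (A - {a})) (\<lambda>\<tau>. h (\<tau>(p := a))))"
    unfolding average_def cP using card_Ea by simp
  finally show ?thesis .
qed

lemma hoeffding_lemma_average:
  fixes g :: "'a \<Rightarrow> real"
  assumes "finite A" "A \<noteq> {}" "l > 0" and range: "\<forall>a\<in>A. \<forall>b\<in>A. \<bar>g a - g b\<bar> \<le> c"
  shows "average A (\<lambda>a. exp (l * (g a - average A g))) \<le> exp (l\<^sup>2 * c\<^sup>2 / 8)"
proof -
  define lo where "lo = Min (g ` A)"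
  have "\<forall>a\<in>A. g a \<in> {lo..lo + c}"
  proof
    fix a assume a: "a \<in> A"
    have "lo \<in> g ` A"
      unfolding lo_def using assms(1,2) by simp
    then obtain b where "b \<in> A" "lo = g b" by auto
    moreover have "lo \<le> g a"
      unfolding lo_def using assms(1) a by simp
    ultimately show "g a \<in> {lo..lo + c}"
      using range a by force
  qed
  then interpret interval_bounded_random_variable "measure_pmf (pmf_of_set A)" g lo "lo + c"
    by unfold_locales (use assms in \<open>auto simp: AE_measure_pmf_iff\<close>)
  have "measure_pmf.expectation (pmf_of_set A) g = average A g"
    unfolding average_def using assms by (simp add: integral_pmf_of_set)
  moreover have "(\<integral>\<^sup>+x. ennreal (exp (l * (g x - average A g))) \<partial>measure_pmf (pmf_of_set A))
      = ennreal (average A (\<lambda>a. exp (l * (g a - average A g))))"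
    using assms unfolding average_def
    by (simp add: nn_integral_pmf_of_set sum_ennreal ennreal_of_nat_eq_real_of_nat, subst divide_ennreal)
       (auto intro: sum_nonneg simp: card_gt_0_iff)
  ultimately show ?thesis
    using Hoeffdings_lemma_nn_integral[OF assms(3)] by simp
qed

definition post_transpose :: "'a set \<Rightarrow> 'a \<Rightarrow> 'a \<Rightarrow> ('a \<Rightarrow> 'a) \<Rightarrow> 'a \<Rightarrow> 'a" where
  "post_transpose P a b \<sigma> = (\<lambda>x. if x \<in> P then Transposition.transpose a b (\<sigma> x) else x)"

lemma post_transpose_in_bijections:
  assumes "\<sigma> \<in> bijections P A"
  shows "post_transpose P a b \<sigma> \<in> bijections P (Transposition.transpose a b ` A)"
proof -
  have "bij_betw \<sigma> P A"
    using assms unfolding bijections_def by blast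
  then have "bij_betw (Transposition.transpose a b \<circ> \<sigma>) P (Transposition.transpose a b ` A)"
    by (rule bij_betw_trans[OF _ inj_on_imp_bij_betw[OF inj_on_transpose]])
  then have "bij_betw (post_transpose P a b \<sigma>) P (Transposition.transpose a b ` A)"
    by (rule bij_betw_cong[THEN iffD1, rotated]) (auto simp: post_transpose_def)
  then show ?thesis
    unfolding bijections_def by (auto simp: post_transpose_def)
qed

lemma post_transpose_involutory:
  "\<sigma> \<in> bijections P A \<Longrightarrow> post_transpose P a b (post_transpose P a b \<sigma>) = \<sigma>"
  by (rule ext) (auto simp: post_transpose_def bijections_def)

lemma bij_betw_post_transpose:
  assumes "a \<in> A" "b \<in> A"
  shows "bij_betw (post_transpose P a b) (bijections P (A - {a})) (bijections P (A - {b}))"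
proof (rule bij_betw_byWitness[where f' = "post_transpose P a b"])
  have "Transposition.transpose a b ` (A - {a}) = A - {b}"
    "Transposition.transpose a b ` (A - {b}) = A - {a}"
    using assms by (auto simp: Transposition.transpose_def image_iff)
  then show "post_transpose P a b ` bijections P (A - {a}) \<subseteq> bijections P (A - {b})"
    "post_transpose P a b ` bijections P (A - {b}) \<subseteq> bijections P (A - {a})"
    using post_transpose_in_bijections[of _ P "A - {a}" a b]
      post_transpose_in_bijections[of _ P "A - {b}" a b] by auto
qed (auto simp: post_transpose_involutory)

lemma post_transpose_fun_upd:
  "p \<in> P \<Longrightarrow> (post_transpose (P - {p}) a b \<tau>)(p := Transposition.transpose a b c)
     = post_transpose P a b (\<tau>(p := c))"
  by (auto simp: post_transpose_def)

lemma post_transpose_apply: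
  "\<sigma> \<in> bijections P A \<Longrightarrow> \<sigma> x \<notin> {a, b} \<Longrightarrow> post_transpose P a b \<sigma> x = \<sigma> x"
  unfolding post_transpose_def using bijections_outside[of \<sigma> P A x] by auto

definition transpose_lipschitz :: "'a set \<Rightarrow> 'a set \<Rightarrow> real \<Rightarrow> (('a \<Rightarrow> 'a) \<Rightarrow> real) \<Rightarrow> bool" where
  "transpose_lipschitz P A c f \<longleftrightarrow>
     (\<forall>\<sigma>\<in>bijections P A. \<forall>a\<in>A. \<forall>b\<in>A. \<bar>f (post_transpose P a b \<sigma>) - f \<sigma>\<bar> \<le> c)"

lemma transpose_lipschitz_fun_upd:
  assumes "transpose_lipschitz P A c f" "p \<in> P" "a \<in> A"
  shows "transpose_lipschitz (P - {p}) (A - {a}) c (\<lambda>\<tau>. f (\<tau>(p := a)))"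
  unfolding transpose_lipschitz_def
proof (intro ballI)
  fix \<tau> a' b' assume \<tau>: "\<tau> \<in> bijections (P - {p}) (A - {a})" and "a' \<in> A - {a}" "b' \<in> A - {a}"
  then have "Transposition.transpose a' b' a = a"
    by (auto simp: Transposition.transpose_def)
  then have "(post_transpose (P - {p}) a' b' \<tau>)(p := a) = post_transpose P a' b' (\<tau>(p := a))"
    using post_transpose_fun_upd[OF assms(2), of a' b' \<tau> a] by simp
  then show "\<bar>f ((post_transpose (P - {p}) a' b' \<tau>)(p := a)) - f (\<tau>(p := a))\<bar> \<le> c"
    using assms \<open>a' \<in> A - {a}\<close> \<open>b' \<in> A - {a}\<close> fun_upd_in_bijections[OF \<tau> assms(2,3)]
    unfolding transpose_lipschitz_def by auto
qed

text \<open>Conditioning on the image of \<open>p\<close>: moving from \<open>\<sigma> p = a\<close> to \<open>\<sigma> p = b\<close> is a bijection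
  between the fibres, and it moves each \<open>\<sigma>\<close> by one transposition.\<close>

lemma transpose_lipschitz_conditional_average:
  assumes f: "transpose_lipschitz P A c f" and fin: "finite P" "finite A" "card P = card A"
    and "p \<in> P" "a \<in> A" "b \<in> A"
  shows "\<bar>average (bijections (P - {p}) (A - {b})) (\<lambda>\<tau>. f (\<tau>(p := b)))
          - average (bijections (P - {p}) (A - {a})) (\<lambda>\<tau>. f (\<tau>(p := a)))\<bar> \<le> c"
proof -
  let ?E = "\<lambda>a. bijections (P - {p}) (A - {a})"
  have card_E: "card (?E a) = card (?E b)"
    using assms by (simp add: card_bijections)
  have "(\<Sum>\<tau>\<in>?E b. f (\<tau>(p := b))) = (\<Sum>\<tau>\<in>?E a. f ((post_transpose (P - {p}) a b \<tau>)(p := b)))"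
    by (rule sum.reindex_bij_betw[symmetric, OF bij_betw_post_transpose[OF \<open>a \<in> A\<close> \<open>b \<in> A\<close>]])
  also have "\<dots> = (\<Sum>\<tau>\<in>?E a. f (post_transpose P a b (\<tau>(p := a))))"
    using post_transpose_fun_upd[OF \<open>p \<in> P\<close>, of a b _ a] by simp
  finally have "average (?E b) (\<lambda>\<tau>. f (\<tau>(p := b))) - average (?E a) (\<lambda>\<tau>. f (\<tau>(p := a)))
      = average (?E a) (\<lambda>\<tau>. f (post_transpose P a b (\<tau>(p := a))) - f (\<tau>(p := a)))"
    unfolding average_def card_E by (simp add: sum_subtractf diff_divide_distrib)
  also have "\<bar>\<dots>\<bar> \<le> average (?E a) (\<lambda>_. c)"
  proof -
    have "\<bar>f (post_transpose P a b (\<tau>(p := a))) - f (\<tau>(p := a))\<bar> \<le> c" if "\<tau> \<in> ?E a" for \<tau>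
      using f fun_upd_in_bijections[OF that \<open>p \<in> P\<close> \<open>a \<in> A\<close>] \<open>a \<in> A\<close> \<open>b \<in> A\<close>
      unfolding transpose_lipschitz_def by blast
    then show ?thesis
      unfolding average_def abs_divide abs_of_nat
      by (intro divide_right_mono order.trans[OF sum_abs sum_mono]) auto
  qed
  also have "\<dots> \<le> c"
    using fin \<open>p \<in> P\<close> \<open>a \<in> A\<close> by (simp add: average_def card_bijections)
  finally show ?thesis .
qed

text \<open>Reveal \<open>\<sigma>\<close> one point at a time (a Doob martingale) and apply Hoeffding's lemma to
  each increment.\<close>

lemma average_exp_bijections_le:
  assumes "finite P" "finite A" "card P = card A" "l > 0" "transpose_lipschitz P A c f"
  shows "average (bijections P A) (\<lambda>\<sigma>. exp (l * (f \<sigma> - average (bijections P A) f)))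
           \<le> exp (l\<^sup>2 * c\<^sup>2 * card P / 8)"
  using assms
proof (induction "card P" arbitrary: P A f)
  case 0
  then show ?case by (simp add: bijections_empty average_def)
next
  case (Suc m)
  then obtain p where p: "p \<in> P" by fastforce
  have cards: "card A = Suc m" "card (P - {p}) = m"
    using Suc.hyps(2) Suc.prems(3) p by simp_all
  define E where "E a = bijections (P - {p}) (A - {a})" for a
  define g where "g a = average (E a) (\<lambda>\<tau>. f (\<tau>(p := a)))" for a
  define \<mu> where "\<mu> = average (bijections P A) f"
  have \<mu>: "\<mu> = average A g"
    unfolding \<mu>_def g_def E_def by (rule average_bijections_decompose[OF p Suc.prems(1-3)])
  have conditional: "average (E a) (\<lambda>\<tau>. exp (l * (f (\<tau>(p := a)) - g a))) \<le> exp (l\<^sup>2 * c\<^sup>2 * m / 8)"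
    if "a \<in> A" for a
    using Suc.hyps(1)[of "P - {p}" "A - {a}" "\<lambda>\<tau>. f (\<tau>(p := a))"] Suc.prems p that cards
      transpose_lipschitz_fun_upd[OF Suc.prems(5) p that]
    unfolding g_def E_def by simp
  have g_range: "\<forall>a\<in>A. \<forall>b\<in>A. \<bar>g a - g b\<bar> \<le> c"
    using transpose_lipschitz_conditional_average[OF Suc.prems(5,1-3) p]
    unfolding g_def E_def by blast
  have "average (bijections P A) (\<lambda>\<sigma>. exp (l * (f \<sigma> - \<mu>)))
      = average A (\<lambda>a. average (E a) (\<lambda>\<tau>. exp (l * (f (\<tau>(p := a)) - \<mu>))))"
    unfolding E_def by (rule average_bijections_decompose[OF p Suc.prems(1-3)])
  also have "\<dots> = average A (\<lambda>a. exp (l * (g a - \<mu>))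
                   * average (E a) (\<lambda>\<tau>. exp (l * (f (\<tau>(p := a)) - g a))))"
  proof -
    have "exp (l * (f (\<tau>(p := a)) - \<mu>)) = exp (l * (g a - \<mu>)) * exp (l * (f (\<tau>(p := a)) - g a))"
      for a \<tau>
      by (simp add: algebra_simps flip: exp_add)
    then show ?thesis
      by (simp add: average_cmult)
  qed
  also have "\<dots> \<le> average A (\<lambda>a. exp (l * (g a - \<mu>)) * exp (l\<^sup>2 * c\<^sup>2 * m / 8))"
    by (intro average_mono mult_left_mono conditional) auto
  also have "\<dots> = exp (l\<^sup>2 * c\<^sup>2 * m / 8) * average A (\<lambda>a. exp (l * (g a - average A g)))"
    unfolding \<mu> average_def by (simp add: sum_distrib_right mult.commute)
  also have "\<dots> \<le> exp (l\<^sup>2 * c\<^sup>2 * m / 8) * exp (l\<^sup>2 * c\<^sup>2 / 8)"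
    using cards Suc.prems(2,4) g_range by (intro mult_left_mono hoeffding_lemma_average) auto
  also have "\<dots> = exp (l\<^sup>2 * c\<^sup>2 * card P / 8)"
    by (simp add: algebra_simps add_divide_distrib flip: exp_add Suc.hyps(2))
  finally show ?case
    unfolding \<mu>_def .
qed

lemma bijections_upper_tail:
  fixes c t :: real
  assumes "finite P" "finite A" "card P = card A" "card P > 0" "c > 0" "t > 0"
    and "transpose_lipschitz P A c f"
  shows "card {\<sigma> \<in> bijections P A. f \<sigma> - average (bijections P A) f \<ge> t} / card (bijections P A)
           \<le> exp (- 2 * t\<^sup>2 / (c\<^sup>2 * card P))"
proof -
  define \<mu> where "\<mu> = average (bijections P A) f"
  define l where "l = 4 * t / (c\<^sup>2 * card P)"
  have "l > 0"
    unfolding l_def using assms by simp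
  have fin: "finite (bijections P A)"
    using assms by (simp add: finite_bijections)
  have "card {\<sigma> \<in> bijections P A. f \<sigma> - \<mu> \<ge> t} / card (bijections P A)
      = average (bijections P A) (\<lambda>\<sigma>. if f \<sigma> - \<mu> \<ge> t then 1 else 0)"
    unfolding average_def using fin by (simp add: sum.If_cases Int_def)
  also have "\<dots> \<le> average (bijections P A) (\<lambda>\<sigma>. exp (- (l * t)) * exp (l * (f \<sigma> - \<mu>)))"
  proof (rule average_mono)
    fix \<sigma>
    have "exp (- (l * t)) * exp (l * (f \<sigma> - \<mu>)) = exp (l * (f \<sigma> - \<mu> - t))"
      by (simp add: algebra_simps flip: exp_add)
    then show "(if f \<sigma> - \<mu> \<ge> t then 1 else 0) \<le> exp (- (l * t)) * exp (l * (f \<sigma> - \<mu>))"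
      using \<open>l > 0\<close> by auto
  qed
  also have "\<dots> \<le> exp (- (l * t)) * exp (l\<^sup>2 * c\<^sup>2 * card P / 8)"
    unfolding average_cmult \<mu>_def
    by (intro mult_left_mono average_exp_bijections_le) (use assms \<open>l > 0\<close> in auto)
  also have "\<dots> = exp (- 2 * t\<^sup>2 / (c\<^sup>2 * card P))"
    using assms unfolding l_def by (simp add: power2_eq_square field_simps flip: exp_add)
  finally show ?thesis
    unfolding \<mu>_def .
qed

lemma bijections_deviation:
  fixes c t :: real
  assumes "finite P" "finite A" "card P = card A" "card P > 0" "c > 0" "t > 0"
    and f: "transpose_lipschitz P A c f"
  shows "card {\<sigma> \<in> bijections P A. \<bar>f \<sigma> - average (bijections P A) f\<bar> \<ge> t} / card (bijections P A)
           \<le> 2 * exp (- 2 * t\<^sup>2 / (c\<^sup>2 * card P))"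
proof -
  let ?E = "bijections P A" and ?g = "\<lambda>\<sigma>. - f \<sigma>"
  have "transpose_lipschitz P A c ?g"
    using f unfolding transpose_lipschitz_def by (simp add: abs_minus_commute)
  moreover have "average ?E ?g = - average ?E f"
    unfolding average_def by (simp add: sum_negf)
  ultimately have tails: "card {\<sigma> \<in> ?E. h \<sigma> - average ?E h \<ge> t} / card ?E
      \<le> exp (- 2 * t\<^sup>2 / (c\<^sup>2 * card P))"
    if "h \<in> {f, ?g}" for h
    using bijections_upper_tail[OF assms(1-6)] f that by auto
  have "{\<sigma> \<in> ?E. \<bar>f \<sigma> - average ?E f\<bar> \<ge> t}
      = {\<sigma> \<in> ?E. f \<sigma> - average ?E f \<ge> t} \<union> {\<sigma> \<in> ?E. ?g \<sigma> - average ?E ?g \<ge> t}"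
    using \<open>average ?E ?g = - average ?E f\<close> by auto
  then have "card {\<sigma> \<in> ?E. \<bar>f \<sigma> - average ?E f\<bar> \<ge> t}
      \<le> card {\<sigma> \<in> ?E. f \<sigma> - average ?E f \<ge> t} + card {\<sigma> \<in> ?E. ?g \<sigma> - average ?E ?g \<ge> t}"
    by (simp add: card_Un_le)
  then have "card {\<sigma> \<in> ?E. \<bar>f \<sigma> - average ?E f\<bar> \<ge> t} / card ?E
      \<le> card {\<sigma> \<in> ?E. f \<sigma> - average ?E f \<ge> t} / card ?E
        + card {\<sigma> \<in> ?E. ?g \<sigma> - average ?E ?g \<ge> t} / card ?E"
    by (simp add: divide_right_mono flip: add_divide_distrib)
  then show ?thesis
    using tails[of f] tails[of ?g] by simp
qed

lemma pow_mult_fact_le_fact: "k \<le> n \<Longrightarrow> (n - k) ^ k * fact (n - k) \<le> (fact n :: nat)"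
proof (induction k arbitrary: n)
  case (Suc k)
  then obtain n' where n: "n = Suc n'"
    by (cases n) auto
  have "(n - Suc k) ^ Suc k * fact (n - Suc k) = (n' - k) * ((n' - k) ^ k * fact (n' - k))"
    using n by simp
  also have "\<dots> \<le> n * fact n'"
    using Suc n by (intro mult_le_mono) auto
  also have "\<dots> = fact n"
    using n by simp
  finally show ?case .
qed simp

lemma fact_le_pow_mult_fact: "k \<le> n \<Longrightarrow> (fact n :: nat) \<le> n ^ k * fact (n - k)"
proof (induction k arbitrary: n)
  case (Suc k)
  then obtain n' where n: "n = Suc n'"
    by (cases n) auto
  have IH: "fact n' \<le> n' ^ k * fact (n' - k)"
    using Suc n by simp
  have "fact n = n * fact n'"
    using n by simp
  also have "\<dots> \<le> n * (n' ^ k * fact (n' - k))"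
    using IH by simp
  also have "\<dots> \<le> n * (n ^ k * fact (n' - k))"
    using n by (intro mult_le_mono power_mono) auto
  also have "\<dots> = n ^ Suc k * fact (n - Suc k)"
    using n by (simp add: algebra_simps)
  finally show ?case .
qed simp

text \<open>Via Bernoulli: \<open>n\<^sup>q (1 - q\<^sup>2/n) \<le> (n - q)\<^sup>q\<close>, and \<open>1 \<le> (1 + 2y)(1 - y)\<close> for \<open>0 \<le> y \<le> 1/2\<close>.\<close>

lemma pow_mult_fact_diff_le:
  assumes "2 * real q ^ 2 \<le> real n" "n > 0"
  shows "real n ^ q * fact (n - q) \<le> (1 + 2 * real q ^ 2 / n) * fact n"
proof -
  define y where "y = real q ^ 2 / n"
  have "real q \<le> real q ^ 2"
    by (cases q) (auto simp: power2_eq_square)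
  then have "real q \<le> real n"
    using assms(1) zero_le_power2[of "real q"] by linarith
  then have "q \<le> n"
    by simp
  have "0 \<le> y" "y \<le> 1/2"
    unfolding y_def using assms by (auto simp: field_simps)
  have "real q / n \<le> 1"
    using \<open>q \<le> n\<close> assms(2) by simp
  then have "1 + real q * (- (real q / n)) \<le> (1 + (- (real q / n))) ^ q"
    by (intro Bernoulli_inequality) simp
  then have "1 - y \<le> (1 - real q / n) ^ q"
    unfolding y_def by (simp add: power2_eq_square)
  then have "real n ^ q * (1 - y) \<le> real n ^ q * (1 - real q / n) ^ q"
    by (intro mult_left_mono) auto
  also have "\<dots> = real ((n - q) ^ q)"
    using \<open>q \<le> n\<close> assms(2) by (simp add: of_nat_diff right_diff_distrib flip: power_mult_distrib)
  finally have bernoulli: "real n ^ q * (1 - y) \<le> real ((n - q) ^ q)" .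
  have "0 \<le> y * (1 - 2 * y)"
    using \<open>0 \<le> y\<close> \<open>y \<le> 1/2\<close> by simp
  then have "1 \<le> (1 + 2 * y) * (1 - y)"
    by (simp add: algebra_simps)
  then have "real n ^ q * fact (n - q) \<le> (1 + 2 * y) * ((real n ^ q * (1 - y)) * fact (n - q))"
    using mult_right_mono[of 1 "(1 + 2 * y) * (1 - y)" "real n ^ q * fact (n - q)"]
    by (simp add: algebra_simps)
  also have "\<dots> \<le> (1 + 2 * y) * (real ((n - q) ^ q) * fact (n - q))"
    using bernoulli \<open>0 \<le> y\<close> by (intro mult_left_mono mult_right_mono) auto
  also have "\<dots> \<le> (1 + 2 * y) * fact n"
  proof (rule mult_left_mono)
    have "real ((n - q) ^ q * fact (n - q)) \<le> real (fact n)"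
      using pow_mult_fact_le_fact[OF \<open>q \<le> n\<close>] by (simp only: of_nat_le_iff)
    then show "real ((n - q) ^ q) * fact (n - q) \<le> fact n"
      by simp
  qed (use \<open>0 \<le> y\<close> in simp)
  finally show ?thesis
    unfolding y_def by simp
qed

lemma abs_sum_le_card_support:
  fixes d :: "'a \<Rightarrow> real"
  assumes "finite I" "finite J" "\<forall>i\<in>I. \<bar>d i\<bar> \<le> 1" "\<forall>i\<in>I. d i \<noteq> 0 \<longrightarrow> i \<in> J"
  shows "\<bar>\<Sum>i\<in>I. d i\<bar> \<le> card J"
proof -
  have "(\<Sum>i\<in>I. d i) = (\<Sum>i\<in>I \<inter> J. d i)"
    by (rule sum.mono_neutral_right) (use assms in auto)
  also have "\<bar>\<dots>\<bar> \<le> (\<Sum>i\<in>I \<inter> J. 1)"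
    by (rule order.trans[OF sum_abs sum_mono]) (use assms in auto)
  also have "\<dots> \<le> card J"
    using assms by (simp add: card_mono)
  finally show ?thesis .
qed

lemma
  assumes "S \<subseteq> {xs. set xs \<subseteq> A \<and> length xs = q}" "finite A"
  shows finite_lists_length_eq_subset: "finite S"
    and card_lists_length_eq_subset_le: "card S \<le> card A ^ q"
  using assms by (auto intro: finite_subset simp flip: card_lists_length_eq
      intro!: card_mono finite_lists_length_eq)

section \<open>The blocks of a permutation\<close>

definition block :: "nat \<Rightarrow> nat \<Rightarrow> nat list" where
  "block q i = [(i - 1) * q + 1 ..< i * q + 1]"

lemma length_block: "i \<ge> 1 \<Longrightarrow> length (block q i) = q"
  by (cases i) (auto simp: block_def)

lemma distinct_block: "distinct (block q i)"
  by (simp add: block_def)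

lemma set_block_subset:
  assumes "1 \<le> i" "i \<le> m"
  shows "set (block q i) \<subseteq> {1..q * m}"
proof -
  have "i * q \<le> q * m"
    using assms by (simp add: mult.commute)
  show ?thesis
  proof
    fix k assume "k \<in> set (block q i)"
    then have "(i - 1) * q + 1 \<le> k" "k < i * q + 1"
      unfolding block_def by auto
    then have "1 \<le> k" "k \<le> q * m"
      using \<open>i * q \<le> q * m\<close> by linarith+
    then show "k \<in> {1..q * m}"
      by simp
  qed
qed

lemma block_index:
  assumes "q \<ge> 1" "i \<ge> 1" "k \<in> set (block q i)"
  shows "(k - 1) div q + 1 = i"
proof -
  have "(i - 1) * q \<le> k - 1" "k - 1 < Suc (i - 1) * q"
    using assms unfolding block_def by auto
  then have "(k - 1) div q = i - 1"
    by (simp add: div_nat_eqI mult.commute)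
  then show ?thesis
    using assms(2) by simp
qed

lemma block_tuples_eq: "block_tuples q n \<sigma> = (\<lambda>i. map \<sigma> (block q i)) ` {1..n div q}"
  unfolding block_tuples_def block_def by auto

definition block_hits :: "nat list set \<Rightarrow> nat \<Rightarrow> nat \<Rightarrow> (nat \<Rightarrow> nat) \<Rightarrow> real" where
  "block_hits S q m \<sigma> = (\<Sum>i=1..m. of_bool (map \<sigma> (block q i) \<in> S))"

lemma card_inter_block_tuples:
  assumes q: "q \<ge> 1" and \<sigma>: "\<sigma> \<in> bijections {1..q * m} {1..q * m}"
  shows "card (S \<inter> block_tuples q (q * m) \<sigma>) = block_hits S q m \<sigma>"
proof -
  let ?h = "\<lambda>i. map \<sigma> (block q i)"
  have inj: "inj_on ?h {1..m}"
  proof (rule inj_onI)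
    fix i j assume i: "i \<in> {1..m}" and j: "j \<in> {1..m}" and "?h i = ?h j"
    have "block q i \<noteq> []"
      using length_block[of i q] i q by auto
    then obtain k where k: "k \<in> set (block q i)"
      using hd_in_set by blast
    then have "\<sigma> k \<in> \<sigma> ` set (block q j)"
      using \<open>?h i = ?h j\<close> by (metis list.set_map imageI)
    then obtain k' where k': "k' \<in> set (block q j)" "\<sigma> k = \<sigma> k'" by auto
    moreover have "inj_on \<sigma> {1..q * m}"
      using \<sigma> unfolding bijections_def bij_betw_def by blast
    ultimately have "k = k'"
      using k set_block_subset[of i m q] set_block_subset[of j m q] i j by (auto dest: inj_onD)
    then show "i = j"
      using block_index[OF q _ k] block_index[OF q _ k'(1)] i j by auto
  qed
  have "S \<inter> block_tuples q (q * m) \<sigma> = ?h ` {i \<in> {1..m}. ?h i \<in> S}"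
    unfolding block_tuples_eq using q by auto
  moreover have "inj_on ?h {i \<in> {1..m}. ?h i \<in> S}"
    using inj by (rule inj_on_subset) auto
  ultimately have "card (S \<inter> block_tuples q (q * m) \<sigma>) = card {i \<in> {1..m}. ?h i \<in> S}"
    by (simp add: card_image)
  then show ?thesis
    unfolding block_hits_def by (simp add: sum_of_bool_eq Int_def)
qed

text \<open>Interchanging two values of \<open>\<sigma>\<close> affects at most the two blocks containing their preimages.\<close>

lemma transpose_lipschitz_block_hits:
  assumes q: "q \<ge> 1"
  shows "transpose_lipschitz {1..q * m} {1..q * m} 2 (block_hits S q m)"
  unfolding transpose_lipschitz_def
proof (intro ballI)
  let ?P = "{1..q * m}"
  fix \<sigma> a b assume \<sigma>: "\<sigma> \<in> bijections ?P ?P" and "a \<in> ?P" "b \<in> ?P"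
  let ?\<sigma>' = "post_transpose ?P a b \<sigma>"
  let ?U = "{k \<in> ?P. \<sigma> k \<in> {a, b}}"
  let ?J = "(\<lambda>k. (k - 1) div q + 1) ` ?U"
  define d :: "nat \<Rightarrow> real"
    where "d i = of_bool (map ?\<sigma>' (block q i) \<in> S) - of_bool (map \<sigma> (block q i) \<in> S)" for i
  have "inj_on \<sigma> ?P"
    using \<sigma> unfolding bijections_def bij_betw_def by blast
  then have "inj_on \<sigma> ?U"
    by (rule inj_on_subset) auto
  have "card ?J \<le> card ?U"
    by (rule card_image_le) simp
  also have "\<dots> \<le> card {a, b}"
    using \<open>inj_on \<sigma> ?U\<close> by (rule card_inj_on_le) auto
  also have "\<dots> \<le> 2"
    by (simp add: card_insert_le_m1)
  finally have "card ?J \<le> 2" .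
  moreover have "\<bar>\<Sum>i=1..m. d i\<bar> \<le> card ?J"
  proof (rule abs_sum_le_card_support)
    show "\<forall>i\<in>{1..m}. d i \<noteq> 0 \<longrightarrow> i \<in> ?J"
    proof (intro ballI impI)
      fix i assume i: "i \<in> {1..m}" and "d i \<noteq> 0"
      have "map ?\<sigma>' (block q i) \<noteq> map \<sigma> (block q i)"
      proof
        assume "map ?\<sigma>' (block q i) = map \<sigma> (block q i)"
        then have "d i = 0"
          unfolding d_def by (simp only: diff_self)
        with \<open>d i \<noteq> 0\<close> show False ..
      qed
      then obtain k where k: "k \<in> set (block q i)" "?\<sigma>' k \<noteq> \<sigma> k"
        by (auto simp: map_eq_conv)
      then have "k \<in> ?U"
        using set_block_subset[of i m q] i post_transpose_apply[OF \<sigma>, of k a b] by auto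
      moreover have "i = (k - 1) div q + 1"
        using block_index[OF q _ k(1)] i by simp
      ultimately show "i \<in> ?J"
        by blast
    qed
    show "\<forall>i\<in>{1..m}. \<bar>d i\<bar> \<le> 1"
      by (simp add: d_def)
  qed simp_all
  ultimately show "\<bar>block_hits S q m ?\<sigma>' - block_hits S q m \<sigma>\<bar> \<le> 2"
    unfolding block_hits_def d_def by (simp add: sum_subtractf)
qed

lemma average_block_hits:
  assumes q: "q \<ge> 1" and S: "S \<subseteq> {xs. length xs = q \<and> distinct xs \<and> set xs \<subseteq> {1..q * m}}"
  shows "average (bijections {1..q * m} {1..q * m}) (block_hits S q m)
           = m * card S * fact (q * m - q) / fact (q * m)"
proof -
  let ?P = "{1..q * m}"
  have "finite S"
    by (rule finite_lists_length_eq_subset[of _ ?P q]) (use S in auto)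
  have fin: "finite (bijections ?P ?P)"
    by (simp add: finite_bijections)
  have block_count: "(\<Sum>\<sigma>\<in>bijections ?P ?P. of_bool (map \<sigma> (block q i) \<in> S)) = real (card S) * fact (q * m - q)"
    if i: "i \<in> {1..m}" for i
  proof -
    have "(\<Sum>\<sigma>\<in>bijections ?P ?P. of_bool (map \<sigma> (block q i) \<in> S) :: real)
        = (\<Sum>s\<in>S. \<Sum>\<sigma>\<in>bijections ?P ?P. of_bool (map \<sigma> (block q i) = s))"
      using \<open>finite S\<close> by (subst sum.swap) (simp add: of_bool_def sum.delta')
    also have "\<dots> = (\<Sum>s\<in>S. real (fact (q * m - q)))"
    proof (intro sum.cong refl)
      fix s assume "s \<in> S"
      then have "card {\<sigma> \<in> bijections ?P ?P. map \<sigma> (block q i) = s} = fact (card ?P - length (block q i))"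
        using S set_block_subset[of i m q] length_block[of i q] i
        by (intro card_bijections_map_eq) (auto simp: distinct_block)
      then show "(\<Sum>\<sigma>\<in>bijections ?P ?P. of_bool (map \<sigma> (block q i) = s)) = real (fact (q * m - q))"
        using fin length_block[of i q] i by (simp add: sum_of_bool_eq Int_def)
    qed
    finally show ?thesis by simp
  qed
  have "average (bijections ?P ?P) (block_hits S q m)
      = (\<Sum>i=1..m. \<Sum>\<sigma>\<in>bijections ?P ?P. of_bool (map \<sigma> (block q i) \<in> S)) / fact (q * m)"
    unfolding average_def block_hits_def by (simp add: card_bijections sum.swap[of _ "bijections _ _"])
  also have "\<dots> = m * card S * fact (q * m - q) / fact (q * m)"
    using block_count by simp
  finally show ?thesis .
qed

section \<open>Concentration of the block count\<close>

lemma average_block_hits_bounds: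
  fixes q m :: nat and S :: "nat list set"
  defines "M \<equiv> card S / (real q * real (q * m) ^ (q - 1))"
  assumes q: "q \<ge> 1" and S: "S \<subseteq> {xs. length xs = q \<and> distinct xs \<and> set xs \<subseteq> {1..q * m}}"
    and n: "2 * real q ^ 2 \<le> real (q * m)"
  shows "M \<le> average (bijections {1..q * m} {1..q * m}) (block_hits S q m)"
    and "average (bijections {1..q * m} {1..q * m}) (block_hits S q m)
           \<le> (1 + 2 * real q ^ 2 / real (q * m)) * M"
proof -
  define n where "n = q * m"
  define r where "r = real n ^ q * fact (n - q) / fact n"
  have "1 \<le> real q ^ 2"
    using q by simp
  then have "0 < real (q * m)"
    using n by linarith
  then have "n > 0" "m > 0"
    unfolding n_def by (simp_all only: of_nat_0_less_iff nat_0_less_mult_iff)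
  have "real n ^ q = real q * real m * real n ^ (q - 1)"
    using q unfolding n_def by (metis Suc_diff_1 less_le_trans of_nat_mult power_Suc zero_less_one mult.assoc)
  then have avg: "average (bijections {1..n} {1..n}) (block_hits S q m) = M * r"
    using average_block_hits[OF q S] \<open>n > 0\<close> q unfolding M_def r_def n_def[symmetric]
    by (simp add: field_simps)
  have "0 \<le> M"
    unfolding M_def by simp
  have "1 \<le> r"
  proof -
    have "q \<le> n"
      using \<open>m > 0\<close> unfolding n_def by simp
    then have "real (fact n) \<le> real (n ^ q * fact (n - q))"
      using fact_le_pow_mult_fact by (simp only: of_nat_le_iff)
    then show ?thesis
      unfolding r_def by simp
  qed
  then show "M \<le> average (bijections {1..q * m} {1..q * m}) (block_hits S q m)"
    using avg \<open>0 \<le> M\<close> mult_left_mono[of 1 r M] unfolding n_def by simp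
  have "r \<le> 1 + 2 * real q ^ 2 / real n"
    using pow_mult_fact_diff_le[of q n] n \<open>n > 0\<close> unfolding r_def n_def
    by (simp add: pos_divide_le_eq)
  then have "M * r \<le> M * (1 + 2 * real q ^ 2 / real n)"
    using \<open>0 \<le> M\<close> by (rule mult_left_mono)
  then show "average (bijections {1..q * m} {1..q * m}) (block_hits S q m)
      \<le> (1 + 2 * real q ^ 2 / real (q * m)) * M"
    using avg unfolding n_def by (simp add: mult.commute)
qed

lemma measure_unif_perm:
  "measure_pmf.prob (unif_perm n) B = card (bijections {1..n} {1..n} \<inter> B) / fact n"
proof -
  have "finite (bijections {1..n} {1..n})" "card (bijections {1..n} {1..n}) = fact n"
    by (simp_all add: finite_bijections card_bijections)
  then have "bijections {1..n} {1..n} \<noteq> {}"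
    by auto
  then show ?thesis
    unfolding unif_perm_def bijections_self[symmetric]
    using \<open>finite (bijections {1..n} {1..n})\<close> \<open>card (bijections {1..n} {1..n}) = fact n\<close>
    by (simp add: measure_pmf_of_set Int_commute)
qed

lemma relative_deviation_exponent:
  fixes e s :: real and q n :: nat
  assumes "q \<ge> 1" "n > 0"
  shows "(e * (s / (real q * real n ^ (q - 1))))\<^sup>2 / (8 * real n)
           = e\<^sup>2 * s\<^sup>2 / real n ^ (2 * q - 1) / (8 * real q ^ 2)"
proof -
  have "2 * q - 1 = (q - 1) * 2 + 1"
    using assms(1) by simp
  then have "real n ^ (2 * q - 1) = (real n ^ (q - 1))\<^sup>2 * real n"
    by (simp add: power_add power_mult)
  then show ?thesis
    using assms by (simp add: field_simps power2_eq_square)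
qed

text \<open>Since \<open>|S| \<le> n^q\<close>, the exponent \<open>\<epsilon>^2 |S|^2 / n^(2q-1)\<close> is at most \<open>\<epsilon>^2 n\<close>.\<close>

lemma four_sq_le_eps_mult:
  fixes e :: real
  assumes "card S \<le> n ^ q" "q \<ge> 1" "16 * q ^ 4 \<le> n" "e > 0"
    and "1 \<le> e\<^sup>2 * (real (card S))\<^sup>2 / real n ^ (2 * q - 1)"
  shows "4 * real q ^ 2 \<le> e * real n"
proof -
  have "1 \<le> q ^ 4"
    using assms(2) by simp
  then have "0 < real n"
    using assms(3) by simp
  have "real (card S) \<le> real n ^ q"
    using assms(1) by (metis of_nat_le_iff of_nat_power)
  then have "(real (card S))\<^sup>2 \<le> (real n ^ q)\<^sup>2"
    by (intro power_mono) auto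
  also have "\<dots> = real n ^ (2 * q - 1 + 1)"
    using assms(2) by (simp flip: power_mult add: mult.commute)
  also have "\<dots> = real n ^ (2 * q - 1) * real n"
    by (simp only: power_add power_one_right)
  finally have "e\<^sup>2 * (real (card S))\<^sup>2 \<le> e\<^sup>2 * (real n ^ (2 * q - 1) * real n)"
    by (rule mult_left_mono) simp
  then have "e\<^sup>2 * (real (card S))\<^sup>2 / real n ^ (2 * q - 1) \<le> e\<^sup>2 * real n"
    using \<open>0 < real n\<close> by (simp add: pos_divide_le_eq mult_ac)
  then have "1 \<le> e\<^sup>2 * real n"
    using assms(5) by linarith
  have "(4 * real q ^ 2)\<^sup>2 = 16 * real q ^ 4"
    by (simp add: power2_eq_square power4_eq_xxxx)
  also have "\<dots> \<le> real n"
    using assms(3) of_nat_le_iff[of "16 * q ^ 4" n] by simp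
  also have "\<dots> \<le> (e\<^sup>2 * real n) * real n"
    using \<open>1 \<le> e\<^sup>2 * real n\<close> \<open>0 < real n\<close> by (simp add: mult_le_cancel_right1)
  also have "\<dots> = (e * real n)\<^sup>2"
    by (simp add: power2_eq_square)
  finally show ?thesis
    by (rule power2_le_imp_le) (use \<open>e > 0\<close> \<open>0 < real n\<close> in simp)
qed

lemma prob_block_tuples_deviation:
  fixes q m :: nat and e :: real and S :: "nat list set"
  defines "M \<equiv> card S / (real q * real (q * m) ^ (q - 1))"
  assumes q: "q \<ge> 1" and S: "S \<subseteq> {xs. length xs = q \<and> distinct xs \<and> set xs \<subseteq> {1..q * m}}"
    and n: "2 * real q ^ 2 \<le> real (q * m)" and e: "4 * real q ^ 2 \<le> e * real (q * m)"
  shows "measure_pmf.prob (unif_perm (q * m))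
           {\<sigma>. \<not> ((1 - e) * M \<le> card (S \<inter> block_tuples q (q * m) \<sigma>) \<and>
                 card (S \<inter> block_tuples q (q * m) \<sigma>) \<le> (1 + e) * M)}
         \<le> 2 * exp (- (e * M)\<^sup>2 / (8 * real (q * m)))"
    (is "measure_pmf.prob _ ?bad \<le> _")
proof (cases "card S = 0")
  case True
  moreover have "finite S"
    by (rule finite_lists_length_eq_subset[of _ "{1..q * m}" q]) (use S in auto)
  ultimately have "S = {}"
    by simp
  then have "?bad = {}"
    unfolding M_def by simp
  then show ?thesis by simp
next
  case False
  define n where "n = q * m"
  define E where "E = bijections {1..n} {1..n}"
  define \<mu> where "\<mu> = average E (block_hits S q m)"
  define t where "t = e * M / 2"
  have "1 \<le> real q ^ 2"
    using q by simp
  have "0 < real n"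
    using n \<open>1 \<le> real q ^ 2\<close> unfolding n_def by linarith
  then have "0 < m"
    unfolding n_def by (simp add: zero_less_mult_iff)
  have "0 < e * real n"
    using e \<open>1 \<le> real q ^ 2\<close> unfolding n_def by linarith
  then have "0 < e"
    using \<open>0 < real n\<close> by (simp add: zero_less_mult_iff)
  have "0 < M"
    using False q \<open>0 < real n\<close> unfolding M_def n_def by simp
  have "M \<le> \<mu>"
    using average_block_hits_bounds(1)[OF q S n] unfolding \<mu>_def E_def M_def n_def .
  have "\<mu> \<le> (1 + 2 * real q ^ 2 / real n) * M"
    using average_block_hits_bounds(2)[OF q S n] unfolding \<mu>_def E_def M_def n_def .
  also have "\<dots> \<le> (1 + e / 2) * M"
    using e \<open>0 < real n\<close> \<open>0 < M\<close> unfolding n_def by (intro mult_right_mono) (simp_all add: field_simps)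
  finally have "\<mu> \<le> (1 + e / 2) * M" .
  have "E \<inter> ?bad \<subseteq> {\<sigma> \<in> E. \<bar>block_hits S q m \<sigma> - \<mu>\<bar> \<ge> t}"
  proof
    fix \<sigma> assume "\<sigma> \<in> E \<inter> ?bad"
    moreover have "card (S \<inter> block_tuples q (q * m) \<sigma>) = block_hits S q m \<sigma>" if "\<sigma> \<in> E"
      using card_inter_block_tuples[OF q] that unfolding E_def n_def .
    ultimately show "\<sigma> \<in> {\<sigma> \<in> E. \<bar>block_hits S q m \<sigma> - \<mu>\<bar> \<ge> t}"
      using \<open>M \<le> \<mu>\<close> \<open>\<mu> \<le> (1 + e / 2) * M\<close> \<open>0 < M\<close> \<open>0 < e\<close> unfolding t_def
      by (auto simp: algebra_simps)
  qed
  moreover have "finite E" "card E = fact n"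
    unfolding E_def by (simp_all add: finite_bijections card_bijections)
  ultimately have "card (E \<inter> ?bad) \<le> card {\<sigma> \<in> E. \<bar>block_hits S q m \<sigma> - \<mu>\<bar> \<ge> t}"
    by (intro card_mono) auto
  then have "measure_pmf.prob (unif_perm n) ?bad
      \<le> card {\<sigma> \<in> E. \<bar>block_hits S q m \<sigma> - \<mu>\<bar> \<ge> t} / card E"
    unfolding measure_unif_perm E_def[symmetric] \<open>card E = fact n\<close>
    by (simp add: divide_right_mono)
  also have "\<dots> \<le> 2 * exp (- 2 * t\<^sup>2 / ((2::real)\<^sup>2 * card {1..n}))"
    unfolding \<mu>_def E_def n_def
    by (rule bijections_deviation)
       (use transpose_lipschitz_block_hits[OF q] q \<open>0 < m\<close> \<open>0 < M\<close> \<open>0 < e\<close> in \<open>auto simp: t_def\<close>)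
  also have "- 2 * t\<^sup>2 / ((2::real)\<^sup>2 * card {1..n}) = - (e * M)\<^sup>2 / (8 * real n)"
    unfolding t_def by (simp add: power2_eq_square)
  finally show ?thesis
    unfolding n_def .
qed

lemma prob_block_tuples_deviation_powr:
  fixes q m :: nat and e K :: real and S :: "nat list set"
  defines "M \<equiv> card S / (real q * real (q * m) ^ (q - 1))"
  assumes q: "q \<ge> 1" and S: "S \<subseteq> {xs. length xs = q \<and> distinct xs \<and> set xs \<subseteq> {1..q * m}}"
    and "e > 0" "K \<ge> 0" and n: "16 * q ^ 4 + 3 \<le> q * m"
    and D: "(8 * real q ^ 2 * K + 1) * ln (q * m) \<le> e\<^sup>2 * (real (card S))\<^sup>2 / real (q * m) ^ (2 * q - 1)"
  shows "measure_pmf.prob (unif_perm (q * m))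
           {\<sigma>. \<not> ((1 - e) * M \<le> card (S \<inter> block_tuples q (q * m) \<sigma>) \<and>
                 card (S \<inter> block_tuples q (q * m) \<sigma>) \<le> (1 + e) * M)}
         \<le> 2 * real (q * m) powr (- K)"
proof -
  define n where "n = q * m"
  define D where "D = e\<^sup>2 * (real (card S))\<^sup>2 / real n ^ (2 * q - 1)"
  have "3 \<le> n" "16 * q ^ 4 \<le> n"
    using n unfolding n_def by linarith+
  then have "1 \<le> ln (real n)"
    using exp_le by (subst ln_ge_iff) auto
  moreover have "0 \<le> 8 * real q ^ 2 * K * ln (real n)"
    using \<open>K \<ge> 0\<close> \<open>1 \<le> ln (real n)\<close> by simp
  ultimately have "1 \<le> D" "8 * real q ^ 2 * K * ln (real n) \<le> D"
    using D unfolding D_def n_def by (simp_all add: algebra_simps)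
  have "card S \<le> n ^ q"
    using card_lists_length_eq_subset_le[of S "{1..q * m}" q] S unfolding n_def by auto
  then have "4 * real q ^ 2 \<le> e * real n"
    using four_sq_le_eps_mult q \<open>16 * q ^ 4 \<le> n\<close> \<open>e > 0\<close> \<open>1 \<le> D\<close> unfolding D_def by blast
  moreover have "2 * real q ^ 2 \<le> real n"
  proof -
    have "real q ^ 2 \<le> real q ^ 4"
      using q power_increasing[of 2 4 "real q"] by simp
    moreover have "16 * real q ^ 4 \<le> real n"
      using \<open>16 * q ^ 4 \<le> n\<close> of_nat_le_iff[of "16 * q ^ 4" n] by simp
    ultimately show ?thesis
      by linarith
  qed
  ultimately have "measure_pmf.prob (unif_perm n)
           {\<sigma>. \<not> ((1 - e) * M \<le> card (S \<inter> block_tuples q n \<sigma>) \<and>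
                 card (S \<inter> block_tuples q n \<sigma>) \<le> (1 + e) * M)}
         \<le> 2 * exp (- (e * M)\<^sup>2 / (8 * real n))"
    using prob_block_tuples_deviation[OF q S] unfolding M_def n_def by simp
  also have "2 * exp (- (e * M)\<^sup>2 / (8 * real n)) = 2 * exp (- (D / (8 * real q ^ 2)))"
    using relative_deviation_exponent[OF q, of n e "card S"] \<open>3 \<le> n\<close>
    unfolding M_def D_def n_def[symmetric] by simp
  also have "2 * exp (- (D / (8 * real q ^ 2))) \<le> 2 * exp (- (K * ln (real n)))"
    using \<open>8 * real q ^ 2 * K * ln (real n) \<le> D\<close> q by (simp add: field_simps)
  also have "\<dots> = 2 * real n powr (- K)"
    using \<open>3 \<le> n\<close> by (simp add: powr_def)
  finally show ?thesis
    unfolding n_def .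
qed

theorem lemma3:
  fixes q :: nat and \<epsilon> :: "nat \<Rightarrow> real" and S :: "nat \<Rightarrow> nat list set"
  assumes q_pos: "q \<ge> 1"
    and eps_pos: "\<And>n. \<epsilon> n > 0"
    and S_tuples: "\<And>n. S n \<subseteq> {xs. length xs = q \<and> distinct xs \<and> set xs \<subseteq> {1..n}}"
    and growth: "filterlim (\<lambda>m. (\<epsilon> (q * m))\<^sup>2 * (real (card (S (q * m))))\<^sup>2
                     / real (q * m) ^ (2 * q - 1) / ln (real (q * m))) at_top sequentially"
  shows "\<forall>K > 0. (\<lambda>m. measure_pmf.prob (unif_perm (q * m))
            {\<sigma>. \<not> ((1 - \<epsilon> (q * m)) * (real (card (S (q * m))) / (real q * real (q * m) ^ (q - 1)))
                       \<le> real (card (S (q * m) \<inter> block_tuples q (q * m) \<sigma>)) \<and>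
                     real (card (S (q * m) \<inter> block_tuples q (q * m) \<sigma>))
                       \<le> (1 + \<epsilon> (q * m)) * (real (card (S (q * m))) / (real q * real (q * m) ^ (q - 1))))})
          \<in> O(\<lambda>m. real (q * m) powr (- K))"
proof (intro allI impI bigoI[where c = 2], goal_cases)
  case (1 K)
  have "\<forall>\<^sub>F m in sequentially. 8 * real q ^ 2 * K + 1 \<le> (\<epsilon> (q * m))\<^sup>2 * (real (card (S (q * m))))\<^sup>2
                     / real (q * m) ^ (2 * q - 1) / ln (real (q * m))"
    using growth unfolding filterlim_at_top by blast
  moreover have "\<forall>\<^sub>F m in sequentially. 16 * q ^ 4 + 3 \<le> m"
    by (rule eventually_ge_at_top)
  ultimately show ?case
  proof eventually_elim
    case (elim m)
    have n: "16 * q ^ 4 + 3 \<le> q * m"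
      using elim(2) q_pos by (simp add: order.trans[OF _ mult_le_mono1[of 1 q m]])
    then have "real 3 \<le> real (q * m)"
      by (simp only: of_nat_le_iff)
    then have "0 < ln (real (q * m))"
      by (subst ln_gt_zero_iff) auto
    then have "(8 * real q ^ 2 * K + 1) * ln (q * m)
        \<le> (\<epsilon> (q * m))\<^sup>2 * (real (card (S (q * m))))\<^sup>2 / real (q * m) ^ (2 * q - 1)"
      using elim(1) by (simp only: pos_le_divide_eq)
    then show ?case
      using prob_block_tuples_deviation_powr[OF q_pos S_tuples eps_pos _ n] \<open>K > 0\<close> by simp
  qed
qed

end
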